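(* Let $\alpha>0$, $\alpha\neq1$. For every unitary $U\in\mathcal{U}(d)$ and all Clifford unitaries $C_1,C_2\in\mathcal{C}_n(d_L)$, $H_\alpha(C_1UC_2)=H_\alpha(U)$.
   Context: Let $d_L\ge 2$, $n\ge1$, $d=d_L^n$. On $\mathbb{C}^{d_L}$ with computational basis $\{|k\rangle\}_{k\in\mathbb{Z}_{d_L}}$, let $Z|k\rangle=\omega^k|k\rangle$, $X|k\rangle=|k+1\rangle$ (mod $d_L$), $\omega=e^{2\pi i/d_L}$, $\tau=-e^{i\pi/d_L}$, $D_{(a_1,a_2)}=\tau^{a_1a_2}X^{a_1}Z^{a_2}$, and for $\mathbf a=\mathbf a_1\oplus\cdots\oplus\mathbf a_n\in\mathbb{Z}_{d_L}^{2n}$ let $D_{\mathbf a}=D_{\mathbf a_1}\otimes\cdots\otimes D_{\mathbf a_n}$ acting on $\mathbb{C}^d$. The Clifford group $\mathcal{C}_n(d_L)$ is the set of unitaries $C$ on $\mathbb{C}^d$ such that for every $\mathbf a$ there exist $s\in\mathbb{Z}_{d_L}$ and $\mathbf a'$ with $CD_{\mathbf a}C^\dagger=\omega^sD_{\mathbf a'}$. For a unitary $U$ let $\mathfrak{C}_{\mathbf{ab}}(U)=\frac1d\operatorname{tr}(D_{\mathbf a}^\dagger UD_{\mathbf b}U^\dagger)$, $\mathfrak{D}_{\mathbf{ab}}(U)=|\mathfrak{C}_{\mathbf{ab}}(U)|^2$, and $H_\alpha(U)=\frac{1}{\alpha-1}\Big(1-\frac{1}{d^2}\sum_{\mathbf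 a,\mathbf b}\mathfrak{D}_{\mathbf{ab}}(U)^\alpha\Big)$. *)

theory Defs
  imports Complex_Main "Jordan_Normal_Form.Matrix"
begin

definition adj :: "complex mat \<Rightarrow> complex mat" where
  "adj A = mat (dim_col A) (dim_row A) (\<lambda>(i,j). cnj (A $$ (j,i)))"

definition mtrace :: "complex mat \<Rightarrow> complex" where
  "mtrace A = (\<Sum>i<dim_row A. A $$ (i,i))"

definition unitaries :: "nat \<Rightarrow> complex mat set" where
  "unitaries d = {U. U \<in> carrier_mat d d \<and> U * adj U = 1\<^sub>m d \<and> adj U * U = 1\<^sub>m d}"

definition kron :: "complex mat \<Rightarrow> complex mat \<Rightarrow> complex mat" where
  "kron A B = mat (dim_row A * dim_row B) (dim_col A * dim_col B)
     (\<lambda>(i,j). A $$ (i div dim_row B, j div dim_col B) * B $$ (i mod dim_row B, j mod dim_col B))"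

definition omega :: "nat \<Rightarrow> complex" where
  "omega dL = exp (2 * pi * \<i> / of_nat dL)"

definition tau :: "nat \<Rightarrow> complex" where
  "tau dL = - exp (pi * \<i> / of_nat dL)"

definition Zop :: "nat \<Rightarrow> complex mat" where
  "Zop dL = mat dL dL (\<lambda>(i,j). if i = j then omega dL ^ j else 0)"

definition Xop :: "nat \<Rightarrow> complex mat" where
  "Xop dL = mat dL dL (\<lambda>(i,j). if i = (j + 1) mod dL then 1 else 0)"

definition D1 :: "nat \<Rightarrow> nat \<times> nat \<Rightarrow> complex mat" where
  "D1 dL a = tau dL ^ (fst a * snd a) \<cdot>\<^sub>m (Xop dL ^\<^sub>m fst a * Zop dL ^\<^sub>m snd a)"

fun Dn :: "nat \<Rightarrow> (nat \<times> nat) list \<Rightarrow> complex mat" where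
  "Dn dL [] = 1\<^sub>m 1"
| "Dn dL (p # ps) = kron (D1 dL p) (Dn dL ps)"

definition Pidx :: "nat \<Rightarrow> nat \<Rightarrow> (nat \<times> nat) list set" where
  "Pidx dL n = {a. length a = n \<and> set a \<subseteq> {..<dL} \<times> {..<dL}}"

definition Clifford :: "nat \<Rightarrow> nat \<Rightarrow> complex mat set" where
  "Clifford dL n = {C. C \<in> unitaries (dL ^ n) \<and>
     (\<forall>a \<in> Pidx dL n. \<exists>s::nat. \<exists>a' \<in> Pidx dL n.
        C * Dn dL a * adj C = omega dL ^ s \<cdot>\<^sub>m Dn dL a')}"

definition frakC :: "nat \<Rightarrow> nat \<Rightarrow> (nat \<times> nat) list \<Rightarrow> (nat \<times> nat) list \<Rightarrow> complex mat \<Rightarrow> complex" where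
  "frakC dL n a b U = mtrace (adj (Dn dL a) * U * Dn dL b * adj U) / of_nat (dL ^ n)"

definition frakD :: "nat \<Rightarrow> nat \<Rightarrow> (nat \<times> nat) list \<Rightarrow> (nat \<times> nat) list \<Rightarrow> complex mat \<Rightarrow> real" where
  "frakD dL n a b U = (cmod (frakC dL n a b U))\<^sup>2"

definition Halpha :: "nat \<Rightarrow> nat \<Rightarrow> real \<Rightarrow> complex mat \<Rightarrow> real" where
  "Halpha dL n \<alpha> U = (1 / (\<alpha> - 1)) *
     (1 - (1 / (real (dL ^ n))\<^sup>2) * (\<Sum>a \<in> Pidx dL n. \<Sum>b \<in> Pidx dL n. (frakD dL n a b U) powr \<alpha>))"

end

(* Conjugation by a Clifford unitary C sends every Weyl operator D_a to a phase times D_(f a),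
   and f is a permutation of the index set: it is injective because distinct Weyl operators are
   orthogonal for the Hilbert-Schmidt inner product, hence never proportional.  Phases disappear
   under the modulus, so
     |tr (D_(f a)^dagger (C V) D_b (C V)^dagger)| = |tr (D_a^dagger V D_b V^dagger)|,
   and symmetrically for V C.  Multiplying by Clifford unitaries on either side therefore only
   permutes the rows or columns of the matrix (D_ab), and the sum of its alpha-th powers defining
   H_alpha is unchanged. *)

theory Submission
  imports Defs "HOL-Analysis.Cartesian_Euclidean_Space" "HOL-Analysis.Complex_Transcendental"
    "HOL-Number_Theory.Cong"
begin

lemma smult_smult_mat: "a \<cdot>\<^sub>m (b \<cdot>\<^sub>m A) = (a * b :: 'a :: semigroup_mult) \<cdot>\<^sub>m A"
  by (rule eq_matI) (simp_all add: mult.assoc)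

lemma smult_one_mat [simp]: "1 \<cdot>\<^sub>m A = (A :: 'a :: monoid_mult mat)"
  by (rule eq_matI) simp_all

lemma index_mult_mat_carrier:
  assumes "A \<in> carrier_mat r m" "B \<in> carrier_mat m c" "i < r" "j < c"
  shows "(A * B) $$ (i, j) = (\<Sum>k<m. A $$ (i, k) * B $$ (k, j))"
  using assms by (simp add: scalar_prod_def atLeast0LessThan)

lemma dim_adj [simp]: "dim_row (adj A) = dim_col A" "dim_col (adj A) = dim_row A"
  unfolding adj_def by simp_all

lemma index_adj [simp]: "i < dim_col A \<Longrightarrow> j < dim_row A \<Longrightarrow> adj A $$ (i, j) = cnj (A $$ (j, i))"
  unfolding adj_def by simp

lemma carrier_adj: "A \<in> carrier_mat r c \<Longrightarrow> adj A \<in> carrier_mat c r"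
  by (intro carrier_matI) (simp_all add: carrier_matD)

lemma adj_adj [simp]: "adj (adj A) = A"
  by (rule eq_matI) simp_all

lemma adj_smult: "adj (k \<cdot>\<^sub>m A) = cnj k \<cdot>\<^sub>m adj A"
  by (rule eq_matI) simp_all

lemma adj_mult:
  assumes A: "A \<in> carrier_mat r m" and B: "B \<in> carrier_mat m c"
  shows "adj (A * B) = adj B * adj A"
proof (rule eq_matI)
  fix i j assume "i < dim_row (adj B * adj A)" "j < dim_col (adj B * adj A)"
  then have i: "i < c" and j: "j < r" using A B by simp_all
  have "adj (A * B) $$ (i, j) = cnj (\<Sum>k<m. A $$ (j, k) * B $$ (k, i))"
    using A B i j by (simp add: index_mult_mat_carrier[OF A B j i])
  also have "\<dots> = (\<Sum>k<m. adj B $$ (i, k) * adj A $$ (k, j))"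
    using A B i j by (simp add: mult.commute)
  also have "\<dots> = (adj B * adj A) $$ (i, j)"
    using index_mult_mat_carrier[OF carrier_adj[OF B] carrier_adj[OF A] i j] by simp
  finally show "adj (A * B) $$ (i, j) = (adj B * adj A) $$ (i, j)" .
qed (use A B in simp_all)

lemma mtrace_smult: "A \<in> carrier_mat r r \<Longrightarrow> mtrace (k \<cdot>\<^sub>m A) = k * mtrace A"
  by (simp add: mtrace_def sum_distrib_left)

lemma mtrace_mult_comm:
  assumes A: "A \<in> carrier_mat r c" and B: "B \<in> carrier_mat c r"
  shows "mtrace (A * B) = mtrace (B * A)"
proof -
  have "mtrace (A * B) = (\<Sum>i<r. \<Sum>k<c. A $$ (i, k) * B $$ (k, i))"
    using A B by (simp add: mtrace_def scalar_prod_def atLeast0LessThan)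
  also have "\<dots> = (\<Sum>k<c. \<Sum>i<r. B $$ (k, i) * A $$ (i, k))"
    by (subst sum.swap) (simp add: mult.commute)
  also have "\<dots> = mtrace (B * A)"
    using A B by (simp add: mtrace_def scalar_prod_def atLeast0LessThan)
  finally show ?thesis .
qed

lemma cnj_mult_self_of_norm_1:
  fixes z :: complex
  assumes "cmod z = 1"
  shows "cnj z * z = 1"
  by (metis assms divide_conv_cnj divide_self mult.commute norm_le_zero_iff not_one_le_zero)

section \<open>Unitary conjugation and traces\<close>

lemma unitariesD:
  assumes "C \<in> unitaries d"
  shows "C \<in> carrier_mat d d" "adj C \<in> carrier_mat d d" "adj C * C = 1\<^sub>m d"
  using assms by (auto simp: unitaries_def carrier_adj)

lemma unitary_cancel_left:
  assumes "C \<in> unitaries d" "M \<in> carrier_mat d d"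
  shows "adj C * (C * M) = M"
proof -
  note C = unitariesD[OF assms(1)]
  have "adj C * (C * M) = (adj C * C) * M"
    using assoc_mult_mat[OF C(2,1) assms(2)] by simp
  then show ?thesis
    using C(3) left_mult_one_mat[OF assms(2)] by simp
qed

lemma mtrace_unitary_conj:
  assumes C: "C \<in> unitaries d" and M: "M \<in> carrier_mat d d"
  shows "mtrace (C * M * adj C) = mtrace M"
proof -
  note C' = unitariesD[OF C]
  have "mtrace (C * M * adj C) = mtrace (adj C * (C * M))"
    using C' M by (intro mtrace_mult_comm[of _ d d]) simp_all
  then show ?thesis
    using unitary_cancel_left[OF C M] by simp
qed

lemma unitary_conj_smult_cancel:
  assumes C: "C \<in> unitaries d" and M: "M \<in> carrier_mat d d" and N: "N \<in> carrier_mat d d"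
    and eq: "C * M * adj C = k \<cdot>\<^sub>m (C * N * adj C)"
  shows "M = k \<cdot>\<^sub>m N"
proof -
  note C' = unitariesD[OF C]
  have uncon: "adj C * (C * X * adj C) * C = X" if "X \<in> carrier_mat d d" for X
    using C' that unitary_cancel_left[OF C] by (simp add: assoc_mult_mat[of _ d d _ d _ d])
  have "M = adj C * (k \<cdot>\<^sub>m (C * N * adj C)) * C"
    using uncon[OF M] eq by simp
  also have "\<dots> = k \<cdot>\<^sub>m N"
    using C' N uncon[OF N]
    by (simp add: mult_smult_distrib[of _ d d _ d] mult_smult_assoc_mat[of _ d d _ d])
  finally show ?thesis .
qed

lemma cmod_mtrace_conj_left:
  assumes C: "C \<in> unitaries d" and V: "V \<in> carrier_mat d d"
    and A: "A \<in> carrier_mat d d" and B: "B \<in> carrier_mat d d"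
    and CA: "C * A * adj C = w \<cdot>\<^sub>m A'" and w: "cmod w = 1"
  shows "cmod (mtrace (adj A' * (C * V) * B * adj (C * V))) = cmod (mtrace (adj A * V * B * adj V))"
proof -
  note C' = unitariesD[OF C]
  note carriers = C' V A B carrier_adj[OF A] carrier_adj[OF V]
  have "adj A' = (w * cnj w) \<cdot>\<^sub>m adj A'"
    using cnj_mult_self_of_norm_1[OF w] by (simp add: mult.commute)
  also have "\<dots> = w \<cdot>\<^sub>m (C * adj A * adj C)"
    using CA[THEN arg_cong[where f = adj]] C' A
    by (simp add: adj_smult adj_mult[of _ d d _ d] smult_smult_mat assoc_mult_mat[of _ d d _ d _ d])
  finally have adjA': "adj A' = w \<cdot>\<^sub>m (C * adj A * adj C)" .
  have eq: "adj A' * (C * V) * B * adj (C * V) = w \<cdot>\<^sub>m (C * (adj A * V * B * adj V) * adj C)"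
    unfolding adjA' adj_mult[OF C'(1) V] using carriers
    by (simp add: unitary_cancel_left[OF C] mult_smult_assoc_mat[of _ d d _ d]
        assoc_mult_mat[of _ d d _ d _ d])
  have M: "adj A * V * B * adj V \<in> carrier_mat d d"
    using carriers by (meson mult_carrier_mat)
  then have "C * (adj A * V * B * adj V) * adj C \<in> carrier_mat d d"
    using C' by (meson mult_carrier_mat)
  from mtrace_smult[OF this]
  have "mtrace (adj A' * (C * V) * B * adj (C * V)) = w * mtrace (adj A * V * B * adj V)"
    unfolding eq mtrace_unitary_conj[OF C M] .
  then show ?thesis
    using w by (simp add: norm_mult)
qed

lemma cmod_mtrace_conj_right:
  assumes C: "C \<in> carrier_mat d d" and V: "V \<in> carrier_mat d d"
    and A: "A \<in> carrier_mat d d" and B: "B \<in> carrier_mat d d" and B': "B' \<in> carrier_mat d d"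
    and CB: "C * B * adj C = w \<cdot>\<^sub>m B'" and w: "cmod w = 1"
  shows "cmod (mtrace (adj A * (V * C) * B * adj (V * C))) = cmod (mtrace (adj A * V * B' * adj V))"
proof -
  note carriers = C V A B B' carrier_adj[OF A] carrier_adj[OF V] carrier_adj[OF C]
  have "adj A * (V * C) * B * adj (V * C) = adj A * (V * (C * B * adj C) * adj V)"
    using carriers by (simp add: adj_mult[OF V C] assoc_mult_mat[of _ d d _ d _ d])
  also have "\<dots> = w \<cdot>\<^sub>m (adj A * V * B' * adj V)"
    unfolding CB using carriers
    by (simp add: mult_smult_assoc_mat[of _ d d _ d] mult_smult_distrib[of _ d d _ d]
        assoc_mult_mat[of _ d d _ d _ d])
  finally have eq: "adj A * (V * C) * B * adj (V * C) = w \<cdot>\<^sub>m (adj A * V * B' * adj V)" .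
  have "adj A * V * B' * adj V \<in> carrier_mat d d"
    using carriers by (meson mult_carrier_mat)
  then have "mtrace (adj A * (V * C) * B * adj (V * C)) = w * mtrace (adj A * V * B' * adj V)"
    unfolding eq by (rule mtrace_smult)
  then show ?thesis
    using w by (simp add: norm_mult)
qed

section \<open>Orthogonality of the Weyl operators\<close>

lemma mult_add_less_mult:
  fixes i j m n :: nat
  assumes "i < m" "j < n"
  shows "i * n + j < m * n"
proof -
  have "i * n + j < Suc i * n" using assms(2) by simp
  also have "\<dots> \<le> m * n" using assms(1) by (intro mult_le_mono1) simp
  finally show ?thesis .
qed

lemma dim_kron [simp]:
  "dim_row (kron A B) = dim_row A * dim_row B"
  "dim_col (kron A B) = dim_col A * dim_col B"
  by (simp_all add: kron_def)

lemma index_kron: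
  assumes "i < dim_row A" "j < dim_col A" "k < dim_row B" "l < dim_col B"
  shows "kron A B $$ (i * dim_row B + k, j * dim_col B + l) = A $$ (i, j) * B $$ (k, l)"
  using assms by (simp add: kron_def mult_add_less_mult)

definition hs_inner :: "complex mat \<Rightarrow> complex mat \<Rightarrow> complex" where
  "hs_inner A B = (\<Sum>i<dim_row A. \<Sum>j<dim_col A. cnj (A $$ (i, j)) * B $$ (i, j))"

lemma hs_inner_smult_right:
  assumes "A \<in> carrier_mat r c" "B \<in> carrier_mat r c"
  shows "hs_inner A (k \<cdot>\<^sub>m B) = k * hs_inner A B"
  using assms by (simp add: hs_inner_def sum_distrib_left mult_ac)

lemma hs_inner_kron:
  assumes A: "A \<in> carrier_mat ra ca" "A' \<in> carrier_mat ra ca"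
    and B: "B \<in> carrier_mat rb cb" "B' \<in> carrier_mat rb cb"
  shows "hs_inner (kron A B) (kron A' B') = hs_inner A A' * hs_inner B B'"
proof -
  let ?h = "\<lambda>M N i j. cnj (M $$ (i, j)) * N $$ (i, j)"
  have "hs_inner (kron A B) (kron A' B') =
      (\<Sum>i<ra. \<Sum>k<rb. \<Sum>j<ca. \<Sum>l<cb. ?h (kron A B) (kron A' B') (k + i * rb) (l + j * cb))"
    using A B by (simp add: hs_inner_def sum_mult_product)
  also have "\<dots> = (\<Sum>i<ra. \<Sum>k<rb. \<Sum>j<ca. \<Sum>l<cb. ?h A A' i j * ?h B B' k l)"
  proof (intro sum.cong refl)
    fix i j k l assume "i \<in> {..<ra}" "j \<in> {..<ca}" "k \<in> {..<rb}" "l \<in> {..<cb}"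
    then show "?h (kron A B) (kron A' B') (k + i * rb) (l + j * cb) = ?h A A' i j * ?h B B' k l"
      using A B index_kron[of i A j k B l] index_kron[of i A' j k B' l] by (simp add: add.commute)
  qed
  also have "\<dots> = hs_inner A A' * hs_inner B B'"
    using A B by (simp add: hs_inner_def sum_product)
  finally show ?thesis .
qed

lemma omega_power: "omega dL ^ k = exp (2 * of_real pi * \<i> * of_nat k / of_nat dL)"
  unfolding omega_def exp_of_nat_mult[symmetric] by (simp add: field_simps)

lemma omega_power_eq_iff:
  assumes "0 < dL"
  shows "omega dL ^ j = omega dL ^ k \<longleftrightarrow> j mod dL = k mod dL"
  using assms by (simp add: omega_power complex_root_unity_eq)

lemma omega_power_dL: "0 < dL \<Longrightarrow> omega dL ^ dL = 1"
  using omega_power_eq_iff[of dL dL 0] by simp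

lemma norm_omega [simp]: "cmod (omega dL) = 1"
  by (simp add: omega_def)

lemma norm_tau [simp]: "cmod (tau dL) = 1"
  by (simp add: tau_def norm_exp_eq_Re)

lemma dim_Xop [simp]: "dim_row (Xop dL) = dL" "dim_col (Xop dL) = dL"
  and dim_Zop [simp]: "dim_row (Zop dL) = dL" "dim_col (Zop dL) = dL"
  by (simp_all add: Xop_def Zop_def)

lemma carrier_Xop [simp]: "Xop dL \<in> carrier_mat dL dL"
  unfolding Xop_def by (rule mat_carrier)

lemma carrier_Zop [simp]: "Zop dL \<in> carrier_mat dL dL"
  unfolding Zop_def by (rule mat_carrier)

lemma carrier_D1: "D1 dL p \<in> carrier_mat dL dL"
  unfolding D1_def
  by (intro smult_carrier_mat mult_carrier_mat[of _ dL dL] pow_carrier_mat carrier_Xop carrier_Zop)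

lemma carrier_Dn: "Dn dL a \<in> carrier_mat (dL ^ length a) (dL ^ length a)"
proof (induction a)
  case Nil
  show ?case by simp
next
  case (Cons p a)
  then show ?case
    using carrier_D1[of dL p] unfolding carrier_mat_def by (simp only: Dn.simps dim_kron) simp
qed

lemma carrier_Dn_Pidx: "a \<in> Pidx dL n \<Longrightarrow> Dn dL a \<in> carrier_mat (dL ^ n) (dL ^ n)"
  using carrier_Dn[of dL a] by (simp add: Pidx_def)

lemma finite_Pidx: "finite (Pidx dL n)"
proof -
  have "Pidx dL n = {a. set a \<subseteq> {..<dL} \<times> {..<dL} \<and> length a = n}"
    by (auto simp: Pidx_def)
  then show ?thesis by (simp add: finite_lists_length_eq)
qed

lemma index_Xop_pow:
  assumes "i < dL" "j < dL"
  shows "(Xop dL ^\<^sub>m a) $$ (i, j) = (if i = (j + a) mod dL then 1 else 0)"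
  using assms
proof (induction a arbitrary: i j)
  case 0
  then show ?case by simp
next
  case (Suc a)
  have "(Xop dL ^\<^sub>m Suc a) $$ (i, j) =
      (\<Sum>k<dL. (Xop dL ^\<^sub>m a) $$ (i, k) * Xop dL $$ (k, j))"
    using Suc.prems by (simp add: scalar_prod_def atLeast0LessThan)
  also have "\<dots> = (\<Sum>k<dL. if k = (j + 1) mod dL then (if i = (k + a) mod dL then 1 else 0) else 0)"
    using Suc by (intro sum.cong refl) (simp add: Xop_def)
  also have "\<dots> = (if i = (j + Suc a) mod dL then 1 else 0)"
    using Suc.prems by (simp add: mod_add_left_eq)
  finally show ?case .
qed

lemma index_Zop_pow:
  assumes "i < dL" "j < dL"
  shows "(Zop dL ^\<^sub>m b) $$ (i, j) = (if i = j then omega dL ^ (b * j) else 0)"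
  using assms
proof (induction b arbitrary: i j)
  case 0
  then show ?case by simp
next
  case (Suc b)
  have "(Zop dL ^\<^sub>m Suc b) $$ (i, j) =
      (\<Sum>k<dL. (Zop dL ^\<^sub>m b) $$ (i, k) * Zop dL $$ (k, j))"
    using Suc.prems by (simp add: scalar_prod_def atLeast0LessThan)
  also have "\<dots> =
      (\<Sum>k<dL. if k = j then (if i = k then omega dL ^ (b * k) * omega dL ^ j else 0) else 0)"
    using Suc by (intro sum.cong refl) (auto simp: Zop_def)
  also have "\<dots> = (if i = j then omega dL ^ (Suc b * j) else 0)"
    using Suc.prems by (simp add: power_add)
  finally show ?case .
qed

lemma index_D1:
  assumes "i < dL" "j < dL"
  shows "D1 dL (a, b) $$ (i, j) =
    (if i = (j + a) mod dL then tau dL ^ (a * b) * omega dL ^ (b * j) else 0)"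
proof -
  have "(Xop dL ^\<^sub>m a * Zop dL ^\<^sub>m b) $$ (i, j) =
      (\<Sum>k<dL. (Xop dL ^\<^sub>m a) $$ (i, k) * (Zop dL ^\<^sub>m b) $$ (k, j))"
    using assms by (simp add: scalar_prod_def atLeast0LessThan)
  also have "\<dots> =
      (\<Sum>k<dL. if k = j then (if i = (k + a) mod dL then omega dL ^ (b * k) else 0) else 0)"
    using assms by (intro sum.cong refl) (simp add: index_Xop_pow index_Zop_pow)
  finally show ?thesis
    using assms by (simp add: D1_def)
qed

lemma hs_inner_D1:
  assumes "0 < dL" "a < dL" "b < dL" "c < dL" "e < dL"
  shows "hs_inner (D1 dL (a, b)) (D1 dL (c, e)) = (if (a, b) = (c, e) then of_nat dL else 0)"
proof -
  \<comment> \<open>\<open>D1 dL (a, b)\<close> lives on the shifted diagonal \<open>i = (j + a) mod dL\<close>, so only \<open>a = c\<close>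
    contributes, and then the \<open>j\<close>-th term is \<open>t * r ^ j\<close> for a \<open>dL\<close>-th root of unity \<open>r\<close>.\<close>
  define t where "t = cnj (tau dL ^ (a * b)) * tau dL ^ (c * e)"
  define r where "r = cnj (omega dL ^ b) * omega dL ^ e"
  have "hs_inner (D1 dL (a, b)) (D1 dL (c, e)) = (\<Sum>i<dL. \<Sum>j<dL.
      if i = (j + a) mod dL \<and> i = (j + c) mod dL then t * r ^ j else 0)"
  proof -
    have "r ^ j = cnj (omega dL ^ (b * j)) * omega dL ^ (e * j)" for j
      by (simp add: r_def power_mult_distrib power_mult)
    then show ?thesis
      unfolding hs_inner_def using carrier_D1[of dL "(a, b)"]
      by (intro sum.cong refl) (simp_all add: index_D1 t_def mult_ac)
  qed
  also have "\<dots> = (\<Sum>j<dL. \<Sum>i<dL. if i = (j + a) mod dL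
      then (if (j + a) mod dL = (j + c) mod dL then t * r ^ j else 0) else 0)"
    by (subst sum.swap) (intro sum.cong refl, auto)
  also have "\<dots> = (\<Sum>j<dL. if (j + a) mod dL = (j + c) mod dL then t * r ^ j else 0)"
    using assms(1) by (simp add: sum.delta)
  also have "\<dots> = (if a = c then t * (\<Sum>j<dL. r ^ j) else 0)"
    using assms cong_add_lcancel_nat[of _ a c dL] by (simp add: cong_def sum_distrib_left)
  also have "\<dots> = (if (a, b) = (c, e) then of_nat dL else 0)"
  proof (cases "a = c \<and> b = e")
    case True
    then have "t = 1" "r = 1"
      using cnj_mult_self_of_norm_1[of "tau dL ^ (a * b)"]
        cnj_mult_self_of_norm_1[of "omega dL ^ b"]
      by (simp_all add: t_def r_def norm_power)
    then show ?thesis using True by simp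
  next
    case False
    have "r \<noteq> 1" if "a = c"
    proof
      assume "r = 1"
      then have "omega dL ^ e = omega dL ^ b"
        using cnj_mult_self_of_norm_1[of "omega dL ^ b"]
        by (simp add: r_def norm_power) (metis mult.assoc mult.commute mult_1_left)
      then show False using False that assms by (simp add: omega_power_eq_iff)
    qed
    moreover have "r ^ dL = 1"
      using omega_power_dL[OF assms(1)]
      by (simp add: r_def power_mult_distrib flip: complex_cnj_power power_mult)
           (simp add: power_mult mult.commute[of _ dL])
    ultimately show ?thesis
      using False by (auto simp: geometric_sum)
  qed
  finally show ?thesis .
qed

lemma hs_inner_Dn:
  assumes "0 < dL" "length a = length b"
    and "set a \<subseteq> {..<dL} \<times> {..<dL}" "set b \<subseteq> {..<dL} \<times> {..<dL}"
  shows "hs_inner (Dn dL a) (Dn dL b) = (if a = b then of_nat (dL ^ length a) else 0)"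
  using assms(2-)
proof (induction a arbitrary: b)
  case Nil
  then show ?case by (simp add: hs_inner_def)
next
  case (Cons p a)
  then obtain q b' where b: "b = q # b'" by (cases b) auto
  have "hs_inner (Dn dL (p # a)) (Dn dL b) =
      hs_inner (D1 dL p) (D1 dL q) * hs_inner (Dn dL a) (Dn dL b')"
    using Cons.prems b carrier_Dn[of dL a] carrier_Dn[of dL b']
    by (simp add: hs_inner_kron[OF carrier_D1 carrier_D1])
  moreover have "hs_inner (D1 dL p) (D1 dL q) = (if p = q then of_nat dL else 0)"
    using Cons.prems b assms(1) hs_inner_D1[of dL "fst p" "snd p" "fst q" "snd q"]
    by (auto simp: mem_Times_iff)
  ultimately show ?case
    using Cons b by simp
qed

lemma Dn_eq_smult_imp_eq:
  assumes "0 < dL" "a \<in> Pidx dL n" "b \<in> Pidx dL n" "Dn dL a = k \<cdot>\<^sub>m Dn dL b"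
  shows "a = b"
proof (rule ccontr)
  assume "a \<noteq> b"
  have hs: "hs_inner (Dn dL x) (Dn dL y) = (if x = y then of_nat (dL ^ n) else 0)"
    if "x \<in> Pidx dL n" "y \<in> Pidx dL n" for x y
    using that hs_inner_Dn[OF assms(1), of x y] by (simp add: Pidx_def)
  have Da: "Dn dL a \<in> carrier_mat (dL ^ n) (dL ^ n)"
    and Db: "Dn dL b \<in> carrier_mat (dL ^ n) (dL ^ n)"
    using assms(2,3) by (simp_all add: carrier_Dn_Pidx)
  have "0 = hs_inner (Dn dL b) (Dn dL a)"
    using hs assms(2,3) \<open>a \<noteq> b\<close> by simp
  also have "\<dots> = k * of_nat (dL ^ n)"
    using hs assms(3,4) hs_inner_smult_right[OF Db Db] by simp
  finally have "k = 0" using assms(1) by simp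
  have "of_nat (dL ^ n) = hs_inner (Dn dL a) (Dn dL a)"
    using hs assms(2) by simp
  also have "\<dots> = 0"
    using assms(4) hs_inner_smult_right[OF Da Db] \<open>k = 0\<close> by simp
  finally show False using assms(1) by simp
qed

section \<open>Clifford invariance\<close>

lemma unitary_Clifford: "C \<in> Clifford dL n \<Longrightarrow> C \<in> unitaries (dL ^ n)"
  by (simp add: Clifford_def)

lemma Clifford_permutes_Weyl:
  assumes dL: "0 < dL" and C: "C \<in> Clifford dL n"
  obtains f s where "bij_betw f (Pidx dL n) (Pidx dL n)"
    "\<And>a. a \<in> Pidx dL n \<Longrightarrow> C * Dn dL a * adj C = omega dL ^ s a \<cdot>\<^sub>m Dn dL (f a)"
proof -
  let ?P = "Pidx dL n"
  obtain f s where
    fs: "\<And>a. a \<in> ?P \<Longrightarrow> f a \<in> ?P \<and> C * Dn dL a * adj C = omega dL ^ s a \<cdot>\<^sub>m Dn dL (f a)"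
  proof -
    have "\<forall>a\<in>?P. \<exists>s. \<exists>a'\<in>?P. C * Dn dL a * adj C = omega dL ^ s \<cdot>\<^sub>m Dn dL a'"
      using C by (simp add: Clifford_def)
    then show ?thesis
      using that by metis
  qed
  have "inj_on f ?P"
  proof (rule inj_onI)
    fix a b assume a: "a \<in> ?P" and b: "b \<in> ?P" and fab: "f a = f b"
    define q where "q = omega dL ^ s a / omega dL ^ s b"
    have "omega dL ^ s b \<noteq> 0"
      by (simp add: omega_def)
    then have "C * Dn dL a * adj C = q \<cdot>\<^sub>m (C * Dn dL b * adj C)"
      unfolding fs[OF a, THEN conjunct2] fs[OF b, THEN conjunct2] fab smult_smult_mat q_def by simp
    then have "Dn dL a = q \<cdot>\<^sub>m Dn dL b"
      by (rule unitary_conj_smult_cancel[OF unitary_Clifford[OF C]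
            carrier_Dn_Pidx[OF a] carrier_Dn_Pidx[OF b]])
    then show "a = b"
      using Dn_eq_smult_imp_eq[OF dL a b] by blast
  qed
  moreover have "f ` ?P \<subseteq> ?P"
    using fs by blast
  ultimately have "bij_betw f ?P ?P"
    using endo_inj_surj[OF finite_Pidx] by (simp add: bij_betw_def)
  then show ?thesis
    using that fs by blast
qed

lemma Halpha_reindex:
  assumes f: "bij_betw f (Pidx dL n) (Pidx dL n)" and g: "bij_betw g (Pidx dL n) (Pidx dL n)"
    and eq: "\<And>a b. a \<in> Pidx dL n \<Longrightarrow> b \<in> Pidx dL n \<Longrightarrow> frakD dL n (f a) (g b) V = frakD dL n a b W"
  shows "Halpha dL n \<alpha> V = Halpha dL n \<alpha> W"
proof -
  let ?P = "Pidx dL n"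
  have "(\<Sum>a\<in>?P. \<Sum>b\<in>?P. frakD dL n a b W powr \<alpha>) =
      (\<Sum>a\<in>?P. \<Sum>b\<in>?P. frakD dL n (f a) (g b) V powr \<alpha>)"
    by (simp add: eq)
  also have "\<dots> = (\<Sum>a\<in>?P. \<Sum>b\<in>?P. frakD dL n (f a) b V powr \<alpha>)"
    by (intro sum.cong refl sum.reindex_bij_betw[OF g])
  also have "\<dots> = (\<Sum>a\<in>?P. \<Sum>b\<in>?P. frakD dL n a b V powr \<alpha>)"
    by (rule sum.reindex_bij_betw[OF f])
  finally show ?thesis
    by (simp add: Halpha_def)
qed

lemma Halpha_mult_Clifford_left:
  assumes dL: "0 < dL" and C: "C \<in> Clifford dL n" and V: "V \<in> carrier_mat (dL ^ n) (dL ^ n)"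
  shows "Halpha dL n \<alpha> (C * V) = Halpha dL n \<alpha> V"
proof -
  obtain f s where f: "bij_betw f (Pidx dL n) (Pidx dL n)"
    and fs: "\<And>a. a \<in> Pidx dL n \<Longrightarrow> C * Dn dL a * adj C = omega dL ^ s a \<cdot>\<^sub>m Dn dL (f a)"
    using Clifford_permutes_Weyl[OF dL C] by blast
  show ?thesis
  proof (rule Halpha_reindex[OF f bij_betw_id])
    fix a b assume a: "a \<in> Pidx dL n" and b: "b \<in> Pidx dL n"
    then have "f a \<in> Pidx dL n"
      using f by (auto dest: bij_betwE)
    then show "frakD dL n (f a) (id b) (C * V) = frakD dL n a b V"
      using cmod_mtrace_conj_left[OF unitary_Clifford[OF C] V _ _ fs[OF a]] a b
      by (simp add: frakD_def frakC_def norm_divide carrier_Dn_Pidx norm_power)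
  qed
qed

lemma Halpha_mult_Clifford_right:
  assumes dL: "0 < dL" and C: "C \<in> Clifford dL n" and V: "V \<in> carrier_mat (dL ^ n) (dL ^ n)"
  shows "Halpha dL n \<alpha> (V * C) = Halpha dL n \<alpha> V"
proof -
  obtain f s where f: "bij_betw f (Pidx dL n) (Pidx dL n)"
    and fs: "\<And>a. a \<in> Pidx dL n \<Longrightarrow> C * Dn dL a * adj C = omega dL ^ s a \<cdot>\<^sub>m Dn dL (f a)"
    using Clifford_permutes_Weyl[OF dL C] by blast
  have "Halpha dL n \<alpha> V = Halpha dL n \<alpha> (V * C)"
  proof (rule Halpha_reindex[OF bij_betw_id f])
    fix a b assume a: "a \<in> Pidx dL n" and b: "b \<in> Pidx dL n"
    then have "f b \<in> Pidx dL n"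
      using f by (auto dest: bij_betwE)
    then show "frakD dL n (id a) (f b) V = frakD dL n a b (V * C)"
      using cmod_mtrace_conj_right[OF unitariesD(1)[OF unitary_Clifford[OF C]] V _ _ _ fs[OF b]] a b
      by (simp add: frakD_def frakC_def norm_divide carrier_Dn_Pidx norm_power)
  qed
  then show ?thesis ..
qed

theorem theorem2:
  fixes dL n :: nat and \<alpha> :: real and U C1 C2 :: "complex mat"
  assumes "dL \<ge> 2" and "n \<ge> 1"
    and "\<alpha> > 0" and "\<alpha> \<noteq> 1"
    and "U \<in> unitaries (dL ^ n)"
    and "C1 \<in> Clifford dL n" and "C2 \<in> Clifford dL n"
  shows "Halpha dL n \<alpha> (C1 * U * C2) = Halpha dL n \<alpha> U"
proof -
  have dL: "0 < dL" using assms(1) by simp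
  have U: "U \<in> carrier_mat (dL ^ n) (dL ^ n)"
    using unitariesD(1)[OF assms(5)] .
  have "C1 * U \<in> carrier_mat (dL ^ n) (dL ^ n)"
    using unitariesD(1)[OF unitary_Clifford[OF assms(6)]] U by (rule mult_carrier_mat)
  then have "Halpha dL n \<alpha> (C1 * U * C2) = Halpha dL n \<alpha> (C1 * U)"
    by (rule Halpha_mult_Clifford_right[OF dL assms(7)])
  also have "\<dots> = Halpha dL n \<alpha> U"
    by (rule Halpha_mult_Clifford_left[OF dL assms(6) U])
  finally show ?thesis .
qed

end
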